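(* Let $T=((\Omega,\mathcal{A}),\{(\Omega,\mathcal{M}_i)\}_{i\in N},\{t_i\}_{i\in N})$ be a type space and let $S\subseteq\Omega$ be a common certainty component such that the players' beliefs in the induced type space $T_S$ are consistent. Then the players' beliefs in $T$ are consistent.
   Context: A field on a set $X$ is a collection of subsets of $X$ containing $X$ and closed under complements and finite intersections. For a field $\mathcal{A}$ on $\Omega$, $\mathrm{pba}(\Omega,\mathcal{A})$ is the set of finitely additive nonnegative $P:\mathcal{A}\to\mathbb{R}$ with $P(\Omega)=1$; $B(\Omega,\mathcal{A})$ the sup-norm closure of the linear span of indicators of sets in $\mathcal{A}$; bounded finitely additive set functions carry the weak* topology (weakest making $\mu\mapsto\int f\,d\mu$ continuous for all $f\in B(\Omega,\mathcal{A})$), $\overline{\,\cdot\,}^\ast$ denotes weak* closure. A type space: $N$ a nonempty set of players, fields $\mathcal{M}_i\subseteq\mathcal{A}$ on a set $\Omega$, $t_i:\Omega\times\mathcal{A}\to[0,1]$ with $t_i(\omega,\cdot)\in\mathrm{pba}(\Omega,\mathcal{A})$, $t_i(\cdot,E)\in B(\Omega,\mathcal{M}_i)$ for $E\in\mathcal{A}$, and $t_i(\omega,E)=1$ whenever $E\in\mathcal{M}_i$, $\omega\in E$. $\Pi_i=\overline{\mathrm{conv}\{t_i(\omega,\cdot):\omega\in\Omega\}}^\ast$ (equivalently the $P\in\mathrm{pba}(\Omega,\mathcal{A})$ with $P(E\cap F)=\int_F t_i(\cdot,E)\,dP$ for all $E\in\mathcal{A},F\in\mathcal{M}_i$). The players'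 beliefs in a type space are consistent if $\bigcap_{i\in I}\Pi_i\ne\emptyset$ for every finite set $I$ of players. A nonempty $S\subseteq\Omega$ is a common certainty component if there is $E\in\mathcal{A}$ with $E\subseteq S$ and $t_i(\omega,E)=1$ for all $\omega\in S$, $i\in N$. The induced type space is $T_S=((S,\mathcal{A}^S),\{(S,\mathcal{M}_i^S)\}_{i\in N},\{t_i^S\}_{i\in N})$ with $\mathcal{A}^S=\{F\cap S:F\in\mathcal{A}\}$, $\mathcal{M}_i^S=\{F\cap S:F\in\mathcal{M}_i\}$, $t_i^S(\omega,F\cap S)=t_i(\omega,F)$ for $\omega\in S$, $F\in\mathcal{A}$. *)

theory Defs
  imports "HOL-Analysis.Analysis"
begin

definition field_on :: "'w set \<Rightarrow> 'w set set \<Rightarrow> bool" where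
  "field_on X F \<longleftrightarrow> F \<subseteq> Pow X \<and> X \<in> F \<and> (\<forall>E\<in>F. X - E \<in> F)
     \<and> (\<forall>E\<in>F. \<forall>G\<in>F. E \<inter> G \<in> F)"

text \<open>pba(Omega, A): finitely additive probabilities on A (values off A are irrelevant).\<close>
definition pba :: "'w set \<Rightarrow> 'w set set \<Rightarrow> ('w set \<Rightarrow> real) set" where
  "pba \<Omega> \<A> = {P. (\<forall>E\<in>\<A>. 0 \<le> P E) \<and> P \<Omega> = 1 \<and>
      (\<forall>E\<in>\<A>. \<forall>F\<in>\<A>. E \<inter> F = {} \<longrightarrow> P (E \<union> F) = P E + P F)}"

text \<open>A-simple functions on Omega (finite linear combinations of indicators of sets in A).\<close>
definition simple_rep :: "'w set \<Rightarrow> 'w set set \<Rightarrow> nat \<Rightarrow> (nat \<Rightarrow> real) \<Rightarrow> (nat \<Rightarrow> 'w set) \<Rightarrow> bool" where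
  "simple_rep \<Omega> \<A> n c E \<longleftrightarrow> (\<forall>k<n. E k \<in> \<A>)"

definition Bfun :: "'w set \<Rightarrow> 'w set set \<Rightarrow> ('w \<Rightarrow> real) set" where
  "Bfun \<Omega> \<A> = {f. \<forall>\<epsilon>>0. \<exists>(n::nat) c E. simple_rep \<Omega> \<A> n c E \<and>
      (\<forall>\<omega>\<in>\<Omega>. \<bar>f \<omega> - (\<Sum>k<n. c k * indicator (E k) \<omega>)\<bar> \<le> \<epsilon>)}"

definition fa_integral :: "'w set \<Rightarrow> 'w set set \<Rightarrow> ('w set \<Rightarrow> real) \<Rightarrow> ('w \<Rightarrow> real) \<Rightarrow> real" where
  "fa_integral \<Omega> \<A> P f = (THE r. \<forall>\<epsilon>>0. \<exists>(n::nat) c E. simple_rep \<Omega> \<A> n c E \<and>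
      (\<forall>\<omega>\<in>\<Omega>. \<bar>f \<omega> - (\<Sum>k<n. c k * indicator (E k) \<omega>)\<bar> \<le> \<epsilon>) \<and>
      \<bar>r - (\<Sum>k<n. c k * P (E k))\<bar> \<le> \<epsilon>)"

definition conv_comb :: "('w set \<Rightarrow> real) set \<Rightarrow> ('w set \<Rightarrow> real) set" where
  "conv_comb C = {(\<lambda>E. \<Sum>k<(n::nat). a k * p k E) | n a p.
      (\<forall>k<n. 0 \<le> a k \<and> p k \<in> C) \<and> (\<Sum>k<n. a k) = 1}"

text \<open>Weak* closure of a set C of elements of pba(Omega, A), taken inside pba(Omega, A)
  (pba is weak* closed in the bounded finitely additive set functions).\<close>
definition wstar_closure :: "'w set \<Rightarrow> 'w set set \<Rightarrow> ('w set \<Rightarrow> real) set \<Rightarrow> ('w set \<Rightarrow> real) set" where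
  "wstar_closure \<Omega> \<A> C = {P \<in> pba \<Omega> \<A>. \<forall>fs. finite fs \<and> fs \<subseteq> Bfun \<Omega> \<A> \<longrightarrow>
      (\<forall>\<epsilon>>0. \<exists>Q\<in>C. \<forall>f\<in>fs. \<bar>fa_integral \<Omega> \<A> P f - fa_integral \<Omega> \<A> Q f\<bar> < \<epsilon>)}"

definition type_space :: "'w set \<Rightarrow> 'w set set \<Rightarrow> 'i set \<Rightarrow> ('i \<Rightarrow> 'w set set)
    \<Rightarrow> ('i \<Rightarrow> 'w \<Rightarrow> 'w set \<Rightarrow> real) \<Rightarrow> bool" where
  "type_space \<Omega> \<A> N M t \<longleftrightarrow> field_on \<Omega> \<A> \<and> N \<noteq> {} \<and>
     (\<forall>i\<in>N. field_on \<Omega> (M i) \<and> M i \<subseteq> \<A> \<and>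
        (\<forall>\<omega>\<in>\<Omega>. \<forall>E\<in>\<A>. 0 \<le> t i \<omega> E \<and> t i \<omega> E \<le> 1) \<and>
        (\<forall>\<omega>\<in>\<Omega>. t i \<omega> \<in> pba \<Omega> \<A>) \<and>
        (\<forall>E\<in>\<A>. (\<lambda>\<omega>. t i \<omega> E) \<in> Bfun \<Omega> (M i)) \<and>
        (\<forall>E\<in>M i. \<forall>\<omega>\<in>E. t i \<omega> E = 1))"

definition Pi_set :: "'w set \<Rightarrow> 'w set set \<Rightarrow> ('i \<Rightarrow> 'w \<Rightarrow> 'w set \<Rightarrow> real) \<Rightarrow> 'i
    \<Rightarrow> ('w set \<Rightarrow> real) set" where
  "Pi_set \<Omega> \<A> t i = wstar_closure \<Omega> \<A> (conv_comb ((\<lambda>\<omega>. t i \<omega>) ` \<Omega>))"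

definition consistent :: "'w set \<Rightarrow> 'w set set \<Rightarrow> 'i set
    \<Rightarrow> ('i \<Rightarrow> 'w \<Rightarrow> 'w set \<Rightarrow> real) \<Rightarrow> bool" where
  "consistent \<Omega> \<A> N t \<longleftrightarrow>
     (\<forall>I. finite I \<and> I \<subseteq> N \<longrightarrow> (\<Inter>i\<in>I. Pi_set \<Omega> \<A> t i) \<noteq> {})"

definition common_certainty_component :: "'w set \<Rightarrow> 'w set set \<Rightarrow> 'i set
    \<Rightarrow> ('i \<Rightarrow> 'w \<Rightarrow> 'w set \<Rightarrow> real) \<Rightarrow> 'w set \<Rightarrow> bool" where
  "common_certainty_component \<Omega> \<A> N t S \<longleftrightarrow> S \<noteq> {} \<and> S \<subseteq> \<Omega> \<and>
     (\<exists>E\<in>\<A>. E \<subseteq> S \<and> (\<forall>\<omega>\<in>S. \<forall>i\<in>N. t i \<omega> E = 1))"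

text \<open>Induced type space T_S: trace fields and t_i^S(w, F \<inter> S) = t_i(w, F).\<close>
definition trace_field :: "'w set set \<Rightarrow> 'w set \<Rightarrow> 'w set set" where
  "trace_field \<A> S = (\<lambda>F. F \<inter> S) ` \<A>"

definition induced_types :: "'w set set \<Rightarrow> 'w set \<Rightarrow> ('i \<Rightarrow> 'w \<Rightarrow> 'w set \<Rightarrow> real)
    \<Rightarrow> ('i \<Rightarrow> 'w \<Rightarrow> 'w set \<Rightarrow> real)" where
  "induced_types \<A> S t = (\<lambda>i \<omega> G. t i \<omega> (SOME F. F \<in> \<A> \<and> G = F \<inter> S))"

end

theory Submission
  imports Defs
begin

(* Common certainty of S gives an event E \<subseteq> S with t_i(\<omega>, E) = 1 for \<omega> \<in> S, so t_i(\<omega>, F)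
   depends only on F \<inter> S and the types of T_S are restrictions of types of T. A common prior P of
   T_S lifts to F \<mapsto> P(F \<inter> S) on \<Omega>; lifting sends convex combinations of T_S-types to convex
   combinations of T-types and preserves the integral of every f \<in> B(\<Omega>, A), since f restricted
   to S lies in B(S, A^S). So the weak* approximations witnessing P \<in> \<Pi>_i^S become weak*
   approximations witnessing that the lift lies in \<Pi>_i.
   The integrals are limits of integrals of uniformly approximating simple functions; they exist
   and are unique because |\<integral> s dP| \<le> sup |s| for simple s. *)

lemma field_on_iff_algebra: "field_on X A \<longleftrightarrow> algebra X A"
proof -
  have "X - X = {}" "X - {} = X" by auto
  then show ?thesis
    unfolding field_on_def algebra_iff_Int by metis
qed

lemma pba_nonneg: "P \<in> pba X A \<Longrightarrow> E \<in> A \<Longrightarrow> 0 \<le> P E"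
  unfolding pba_def by blast

lemma pba_space: "P \<in> pba X A \<Longrightarrow> P X = 1"
  unfolding pba_def by blast

lemma pba_add: "P \<in> pba X A \<Longrightarrow> E \<in> A \<Longrightarrow> F \<in> A \<Longrightarrow> E \<inter> F = {} \<Longrightarrow> P (E \<union> F) = P E + P F"
  unfolding pba_def by blast

lemma (in algebra) pba_split:
  assumes P: "P \<in> pba \<Omega> M" and "E \<in> M" "F \<in> M"
  shows "P F = P (F \<inter> E) + P (F - E)"
proof -
  have "P ((F \<inter> E) \<union> (F - E)) = P (F \<inter> E) + P (F - E)"
    by (rule pba_add[OF P]) (use assms in auto)
  moreover have "(F \<inter> E) \<union> (F - E) = F" by blast
  ultimately show ?thesis by simp
qed

lemma (in algebra) pba_Int_certain:
  assumes P: "P \<in> pba \<Omega> M" and E: "E \<in> M" "P E = 1" and F: "F \<in> M"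
  shows "P (F \<inter> E) = P F"
proof -
  have "P \<Omega> = P E + P (\<Omega> - E)"
    using pba_split[OF P E(1) top] sets_into_space[OF E(1)] by (simp add: Int_absorb1)
  then have "P (\<Omega> - E) = 0"
    using pba_space[OF P] E(2) by simp
  moreover have "P (\<Omega> - E) = P (F - E) + P (\<Omega> - E - F)"
  proof -
    have "(\<Omega> - E) \<inter> F = F - E" using sets_into_space[OF F] by blast
    then show ?thesis using pba_split[OF P F compl_sets[OF E(1)]] by simp
  qed
  moreover have "0 \<le> P (F - E)" "0 \<le> P (\<Omega> - E - F)"
    using E(1) F by (auto intro!: pba_nonneg[OF P])
  ultimately have "P (F - E) = 0" by linarith
  then show ?thesis
    using pba_split[OF P E(1) F] by simp
qed

abbreviation simple_fun :: "nat \<Rightarrow> (nat \<Rightarrow> real) \<Rightarrow> (nat \<Rightarrow> 'w set) \<Rightarrow> 'w \<Rightarrow> real" where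
  "simple_fun n c E \<omega> \<equiv> \<Sum>k<n. c k * indicator (E k) \<omega>"

abbreviation fa_simple_integral ::
    "('w set \<Rightarrow> real) \<Rightarrow> nat \<Rightarrow> (nat \<Rightarrow> real) \<Rightarrow> (nat \<Rightarrow> 'w set) \<Rightarrow> real" where
  "fa_simple_integral P n c E \<equiv> \<Sum>k<n. c k * P (E k)"

text \<open>Localised to \<open>D\<close> so that the induction on \<open>n\<close> can split \<open>D\<close> along \<open>E n\<close>.\<close>
lemma (in algebra) pba_simple_integral_on_le:
  assumes P: "P \<in> pba \<Omega> M"
  shows "D \<in> M \<Longrightarrow> \<forall>k<n. E k \<in> M \<Longrightarrow> \<forall>\<omega>\<in>D. simple_fun n c E \<omega> \<le> b
    \<Longrightarrow> (\<Sum>k<n. c k * P (E k \<inter> D)) \<le> b * P D"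
proof (induction n arbitrary: b D)
  case 0
  show ?case
  proof (cases "D = {}")
    case True
    then show ?thesis using pba_split[OF P empty_sets empty_sets] by simp
  next
    case False
    with 0 have "0 \<le> b" by auto
    with pba_nonneg[OF P \<open>D \<in> M\<close>] show ?thesis by simp
  qed
next
  case (Suc n)
  have En: "E n \<in> M" and Ek: "\<forall>k<n. E k \<in> M" using Suc.prems(2) by simp_all
  have "(\<Sum>k<n. c k * P (E k \<inter> (D \<inter> E n))) \<le> (b - c n) * P (D \<inter> E n)"
    using Suc.prems(3) by (intro Suc.IH Ek) (auto simp: Suc.prems(1) En)
  moreover have "(\<Sum>k<n. c k * P (E k \<inter> (D - E n))) \<le> b * P (D - E n)"
    using Suc.prems(3) by (intro Suc.IH Ek) (auto simp: Suc.prems(1) En)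
  moreover have "P (E k \<inter> D) = P (E k \<inter> (D \<inter> E n)) + P (E k \<inter> (D - E n))" if "k < n" for k
    using pba_split[OF P En Int[OF _ Suc.prems(1)]] Ek that by (simp add: Int_assoc Int_Diff)
  moreover have "P D = P (D \<inter> E n) + P (D - E n)"
    using pba_split[OF P En Suc.prems(1)] .
  ultimately show ?case
    by (simp add: sum.distrib algebra_simps Int_commute)
qed

lemma (in algebra) pba_simple_integral_abs_le:
  assumes P: "P \<in> pba \<Omega> M" and E: "\<forall>k<n. E k \<in> M"
    and b: "\<forall>\<omega>\<in>\<Omega>. \<bar>simple_fun n c E \<omega>\<bar> \<le> b"
  shows "\<bar>fa_simple_integral P n c E\<bar> \<le> b"
proof -
  have E_Int: "E k \<inter> \<Omega> = E k" if "k < n" for k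
    using E that sets_into_space by blast
  have "(\<Sum>k<n. c k * P (E k \<inter> \<Omega>)) \<le> b * P \<Omega>"
    using b by (intro pba_simple_integral_on_le[OF P top E]) (auto simp: abs_le_iff)
  moreover have "(\<Sum>k<n. - c k * P (E k \<inter> \<Omega>)) \<le> b * P \<Omega>"
    using b by (intro pba_simple_integral_on_le[OF P top E]) (auto simp: abs_le_iff sum_negf)
  ultimately show ?thesis
    using E_Int pba_space[OF P] by (simp add: sum_negf)
qed

lemma sum_lessThan_add: "(\<Sum>k<m + n. f k) = (\<Sum>k<m. f k) + (\<Sum>k<n. f (m + k))"
  for f :: "nat \<Rightarrow> 'a::comm_monoid_add"
  by (induction n) (auto simp: add.assoc)

lemma (in algebra) pba_simple_integral_dist_le:
  assumes P: "P \<in> pba \<Omega> M"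
    and s1: "simple_rep \<Omega> M n1 c1 E1" "\<forall>\<omega>\<in>\<Omega>. \<bar>f \<omega> - simple_fun n1 c1 E1 \<omega>\<bar> \<le> e1"
    and s2: "simple_rep \<Omega> M n2 c2 E2" "\<forall>\<omega>\<in>\<Omega>. \<bar>f \<omega> - simple_fun n2 c2 E2 \<omega>\<bar> \<le> e2"
  shows "\<bar>fa_simple_integral P n1 c1 E1 - fa_simple_integral P n2 c2 E2\<bar> \<le> e1 + e2"
proof -
  define c where "c k = (if k < n1 then c1 k else - c2 (k - n1))" for k
  define E where "E k = (if k < n1 then E1 k else E2 (k - n1))" for k
  have concat: "(\<Sum>k<n1 + n2. c k * g (E k)) =
      (\<Sum>k<n1. c1 k * g (E1 k)) - (\<Sum>k<n2. c2 k * g (E2 k))" for g :: "'a set \<Rightarrow> real"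
    unfolding sum_lessThan_add c_def E_def by (simp add: sum_negf)
  have "\<forall>k<n1 + n2. E k \<in> M"
    using s1(1) s2(1) unfolding simple_rep_def E_def by auto
  moreover have "\<forall>\<omega>\<in>\<Omega>. \<bar>simple_fun (n1 + n2) c E \<omega>\<bar> \<le> e1 + e2"
    using s1(2) s2(2) concat[of "\<lambda>A. indicator A _"] by fastforce
  ultimately have "\<bar>fa_simple_integral P (n1 + n2) c E\<bar> \<le> e1 + e2"
    by (rule pba_simple_integral_abs_le[OF P])
  then show ?thesis
    using concat[of P] by simp
qed

definition has_fa_integral ::
    "'w set \<Rightarrow> 'w set set \<Rightarrow> ('w set \<Rightarrow> real) \<Rightarrow> ('w \<Rightarrow> real) \<Rightarrow> real \<Rightarrow> bool" where
  "has_fa_integral X A P f r \<longleftrightarrow> (\<forall>\<epsilon>>0. \<exists>n c E. simple_rep X A n c E \<and>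
      (\<forall>\<omega>\<in>X. \<bar>f \<omega> - simple_fun n c E \<omega>\<bar> \<le> \<epsilon>) \<and> \<bar>r - fa_simple_integral P n c E\<bar> \<le> \<epsilon>)"

lemma fa_integral_def': "fa_integral X A P f = (THE r. has_fa_integral X A P f r)"
  unfolding fa_integral_def has_fa_integral_def ..

lemma (in algebra) has_fa_integral_unique:
  assumes P: "P \<in> pba \<Omega> M" and r1: "has_fa_integral \<Omega> M P f r1" and r2: "has_fa_integral \<Omega> M P f r2"
  shows "r1 = r2"
proof -
  have "\<bar>r1 - r2\<bar> \<le> 0 + e" if "e > 0" for e
  proof -
    have "e / 4 > 0" using that by simp
    obtain n1 c1 E1 where s1: "simple_rep \<Omega> M n1 c1 E1"
      "\<forall>\<omega>\<in>\<Omega>. \<bar>f \<omega> - simple_fun n1 c1 E1 \<omega>\<bar> \<le> e / 4" "\<bar>r1 - fa_simple_integral P n1 c1 E1\<bar> \<le> e / 4"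
      using r1 \<open>e / 4 > 0\<close> unfolding has_fa_integral_def by blast
    obtain n2 c2 E2 where s2: "simple_rep \<Omega> M n2 c2 E2"
      "\<forall>\<omega>\<in>\<Omega>. \<bar>f \<omega> - simple_fun n2 c2 E2 \<omega>\<bar> \<le> e / 4" "\<bar>r2 - fa_simple_integral P n2 c2 E2\<bar> \<le> e / 4"
      using r2 \<open>e / 4 > 0\<close> unfolding has_fa_integral_def by blast
    show ?thesis
      using pba_simple_integral_dist_le[OF P s1(1,2) s2(1,2)] s1(3) s2(3) by linarith
  qed
  then have "\<bar>r1 - r2\<bar> \<le> 0"
    by (rule field_le_epsilon)
  then show ?thesis by simp
qed

lemma real_limit_error_bound:
  fixes I e :: "nat \<Rightarrow> real"
  assumes dist: "\<And>m l. \<bar>I m - I l\<bar> \<le> e m + e l" and e: "e \<longlonglongrightarrow> 0"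
  obtains r where "\<And>m. \<bar>r - I m\<bar> \<le> e m"
proof -
  have "Cauchy I"
  proof (rule CauchyI)
    fix \<epsilon> :: real assume "0 < \<epsilon>"
    then obtain M where M: "\<forall>m\<ge>M. \<bar>e m\<bar> < \<epsilon> / 2"
      using LIMSEQ_D[OF e, of "\<epsilon> / 2"] by auto
    then have "norm (I m - I l) < \<epsilon>" if "M \<le> m" "M \<le> l" for m l
    proof -
      have "\<bar>e m\<bar> < \<epsilon> / 2" "\<bar>e l\<bar> < \<epsilon> / 2" using M that by auto
      then show ?thesis using dist[of m l] by simp
    qed
    then show "\<exists>M. \<forall>m\<ge>M. \<forall>l\<ge>M. norm (I m - I l) < \<epsilon>"
      by blast
  qed
  then obtain r where r: "I \<longlonglongrightarrow> r"
    using Cauchy_convergent convergent_def by blast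
  have "\<bar>r - I m\<bar> \<le> e m" for m
  proof (rule tendsto_le[OF trivial_limit_sequentially])
    show "(\<lambda>l. e m + e l) \<longlonglongrightarrow> e m"
      using tendsto_add[OF tendsto_const e] by simp
    show "(\<lambda>l. \<bar>I l - I m\<bar>) \<longlonglongrightarrow> \<bar>r - I m\<bar>"
      by (intro tendsto_intros r)
    show "\<forall>\<^sub>F l in sequentially. \<bar>I l - I m\<bar> \<le> e m + e l"
      using dist by (simp add: add.commute)
  qed
  then show thesis by (rule that)
qed

lemma (in algebra) has_fa_integral_exists:
  assumes P: "P \<in> pba \<Omega> M" and f: "f \<in> Bfun \<Omega> M"
  obtains r where "has_fa_integral \<Omega> M P f r"
proof -
  let ?e = "\<lambda>m::nat. inverse (real (Suc m))"
  have "\<forall>m. \<exists>n c E. simple_rep \<Omega> M n c E \<and> (\<forall>\<omega>\<in>\<Omega>. \<bar>f \<omega> - simple_fun n c E \<omega>\<bar> \<le> ?e m)"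
    using f unfolding Bfun_def by simp
  then obtain n c E where approx: "\<And>m. simple_rep \<Omega> M (n m) (c m) (E m)"
    "\<And>m. \<forall>\<omega>\<in>\<Omega>. \<bar>f \<omega> - simple_fun (n m) (c m) (E m) \<omega>\<bar> \<le> ?e m"
    by metis
  define I where "I m = fa_simple_integral P (n m) (c m) (E m)" for m
  have "\<bar>I m - I l\<bar> \<le> ?e m + ?e l" for m l
    unfolding I_def by (rule pba_simple_integral_dist_le[OF P approx approx])
  then obtain r where r: "\<And>m. \<bar>r - I m\<bar> \<le> ?e m"
    using LIMSEQ_inverse_real_of_nat by (rule real_limit_error_bound) blast
  have "has_fa_integral \<Omega> M P f r"
    unfolding has_fa_integral_def
  proof (intro allI impI)
    fix \<epsilon> :: real assume "\<epsilon> > 0"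
    then obtain m where "?e m < \<epsilon>"
      using reals_Archimedean by blast
    then show "\<exists>n c E. simple_rep \<Omega> M n c E \<and> (\<forall>\<omega>\<in>\<Omega>. \<bar>f \<omega> - simple_fun n c E \<omega>\<bar> \<le> \<epsilon>) \<and>
        \<bar>r - fa_simple_integral P n c E\<bar> \<le> \<epsilon>"
      using approx[of m] r[of m] unfolding I_def by force
  qed
  then show thesis by (rule that)
qed

lemma (in algebra) has_fa_integral_fa_integral:
  assumes "P \<in> pba \<Omega> M" "f \<in> Bfun \<Omega> M"
  shows "has_fa_integral \<Omega> M P f (fa_integral \<Omega> M P f)"
proof -
  obtain r where r: "has_fa_integral \<Omega> M P f r"
    using has_fa_integral_exists[OF assms] .
  then have "fa_integral \<Omega> M P f = r"
    unfolding fa_integral_def' by (intro the_equality r has_fa_integral_unique[OF assms(1) _ r])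
  with r show ?thesis by simp
qed

lemma (in algebra) algebra_trace_field:
  assumes "S \<subseteq> \<Omega>"
  shows "algebra S (trace_field M S)"
  unfolding algebra_iff_Int trace_field_def
proof (intro conjI ballI)
  show "(\<lambda>F. F \<inter> S) ` M \<subseteq> Pow S" "{} \<in> (\<lambda>F. F \<inter> S) ` M"
    by auto
next
  fix G assume "G \<in> (\<lambda>F. F \<inter> S) ` M"
  then obtain F where "F \<in> M" "G = F \<inter> S" by blast
  moreover have "S - F \<inter> S = (\<Omega> - F) \<inter> S" using assms by blast
  ultimately show "S - G \<in> (\<lambda>F. F \<inter> S) ` M" by blast
next
  fix G H assume "G \<in> (\<lambda>F. F \<inter> S) ` M" "H \<in> (\<lambda>F. F \<inter> S) ` M"
  then obtain F F' where "F \<in> M" "G = F \<inter> S" "F' \<in> M" "H = F' \<inter> S" by blast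
  moreover have "F \<inter> S \<inter> (F' \<inter> S) = (F \<inter> F') \<inter> S" by blast
  ultimately show "G \<inter> H \<in> (\<lambda>F. F \<inter> S) ` M" by blast
qed

lemma pba_trace_lift:
  assumes "S \<subseteq> X" and P: "P \<in> pba S (trace_field A S)"
  shows "(\<lambda>F. P (F \<inter> S)) \<in> pba X A"
  unfolding pba_def
proof (intro CollectI conjI ballI impI)
  show "0 \<le> P (E \<inter> S)" if "E \<in> A" for E
    using that pba_nonneg[OF P] unfolding trace_field_def by blast
  show "P (X \<inter> S) = 1"
    using pba_space[OF P] assms(1) by (simp add: Int_absorb1)
  fix E F assume "E \<in> A" "F \<in> A" "E \<inter> F = {}"
  then have "P (E \<inter> S \<union> F \<inter> S) = P (E \<inter> S) + P (F \<inter> S)"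
    by (intro pba_add[OF P]) (auto simp: trace_field_def)
  then show "P ((E \<union> F) \<inter> S) = P (E \<inter> S) + P (F \<inter> S)"
    by (simp add: Int_Un_distrib2)
qed

lemma (in algebra) pba_trace_field:
  assumes "S \<subseteq> \<Omega>" and Q: "Q \<in> pba \<Omega> M" and QP: "\<forall>F\<in>M. Q F = P (F \<inter> S)"
  shows "P \<in> pba S (trace_field M S)"
  unfolding pba_def
proof (intro CollectI conjI ballI impI)
  show "0 \<le> P G" if "G \<in> trace_field M S" for G
    using that pba_nonneg[OF Q] QP unfolding trace_field_def by auto
  show "P S = 1"
    using pba_space[OF Q] QP assms(1) by (metis top Int_absorb1)
  fix G H assume "G \<in> trace_field M S" "H \<in> trace_field M S" "G \<inter> H = {}"
  then obtain F F' where F: "F \<in> M" "G = F \<inter> S" "F' \<in> M" "H = F' \<inter> S" and "G \<inter> H = {}"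
    unfolding trace_field_def by blast
  define D where "D = F' - F"
  have D: "D \<in> M" unfolding D_def using F by blast
  have "G \<union> H = (F \<union> D) \<inter> S" "H = D \<inter> S"
    using F \<open>G \<inter> H = {}\<close> unfolding D_def by auto
  moreover have "Q (F \<union> D) = Q F + Q D"
    using F D unfolding D_def by (intro pba_add[OF Q]) auto
  ultimately show "P (G \<union> H) = P G + P H"
    using QP F(1,2) D by (metis Un)
qed

lemma uniform_approx_trace:
  assumes "S \<subseteq> X" and "simple_rep X A n c E" and "\<forall>\<omega>\<in>X. \<bar>f \<omega> - simple_fun n c E \<omega>\<bar> \<le> e"
  shows "simple_rep S (trace_field A S) n c (\<lambda>k. E k \<inter> S)"
    and "\<forall>\<omega>\<in>S. \<bar>f \<omega> - simple_fun n c (\<lambda>k. E k \<inter> S) \<omega>\<bar> \<le> e"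
  using assms unfolding simple_rep_def trace_field_def by (auto simp: indicator_def)

lemma Bfun_trace:
  assumes "S \<subseteq> X" and "f \<in> Bfun X A"
  shows "f \<in> Bfun S (trace_field A S)"
  using assms uniform_approx_trace[OF assms(1)] unfolding Bfun_def by blast

lemma has_fa_integral_trace:
  assumes "S \<subseteq> X" and QP: "\<forall>F\<in>A. Q F = P (F \<inter> S)" and r: "has_fa_integral X A Q f r"
  shows "has_fa_integral S (trace_field A S) P f r"
  unfolding has_fa_integral_def
proof (intro allI impI)
  fix \<epsilon> :: real assume "\<epsilon> > 0"
  then obtain n c E where approx: "simple_rep X A n c E" "\<forall>\<omega>\<in>X. \<bar>f \<omega> - simple_fun n c E \<omega>\<bar> \<le> \<epsilon>"
    and "\<bar>r - fa_simple_integral Q n c E\<bar> \<le> \<epsilon>"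
    using r unfolding has_fa_integral_def by blast
  moreover have "fa_simple_integral Q n c E = fa_simple_integral P n c (\<lambda>k. E k \<inter> S)"
    using approx(1) QP unfolding simple_rep_def by simp
  ultimately show "\<exists>n c E. simple_rep S (trace_field A S) n c E \<and>
      (\<forall>\<omega>\<in>S. \<bar>f \<omega> - simple_fun n c E \<omega>\<bar> \<le> \<epsilon>) \<and> \<bar>r - fa_simple_integral P n c E\<bar> \<le> \<epsilon>"
    using uniform_approx_trace[OF assms(1) approx] by metis
qed

lemma (in algebra) fa_integral_trace:
  assumes S: "S \<subseteq> \<Omega>" and Q: "Q \<in> pba \<Omega> M" and QP: "\<forall>F\<in>M. Q F = P (F \<inter> S)"
    and f: "f \<in> Bfun \<Omega> M"
  shows "fa_integral \<Omega> M Q f = fa_integral S (trace_field M S) P f"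
proof -
  interpret trace: algebra S "trace_field M S"
    using algebra_trace_field[OF S] .
  have P: "P \<in> pba S (trace_field M S)"
    using pba_trace_field[OF S Q QP] .
  have "has_fa_integral S (trace_field M S) P f (fa_integral \<Omega> M Q f)"
    using has_fa_integral_trace[OF S QP has_fa_integral_fa_integral[OF Q f]] .
  moreover have "has_fa_integral S (trace_field M S) P f (fa_integral S (trace_field M S) P f)"
    using trace.has_fa_integral_fa_integral[OF P Bfun_trace[OF S f]] .
  ultimately show ?thesis
    using trace.has_fa_integral_unique[OF P] by blast
qed

lemma conv_comb_pba:
  assumes "C \<subseteq> pba X A"
  shows "conv_comb C \<subseteq> pba X A"
proof
  fix Q assume "Q \<in> conv_comb C"
  then obtain n :: nat and a p where Q: "Q = (\<lambda>E. \<Sum>k<n. a k * p k E)"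
    and a: "\<forall>k<n. 0 \<le> a k \<and> p k \<in> C" "(\<Sum>k<n. a k) = 1"
    unfolding conv_comb_def by blast
  have p: "p k \<in> pba X A" if "k < n" for k
    using a(1) assms that by blast
  show "Q \<in> pba X A"
    unfolding Q pba_def
  proof (intro CollectI conjI ballI impI)
    show "0 \<le> (\<Sum>k<n. a k * p k E)" if "E \<in> A" for E
      using a(1) pba_nonneg[OF p that] by (intro sum_nonneg) simp
    show "(\<Sum>k<n. a k * p k X) = 1"
      using a(2) pba_space[OF p] by simp
    show "(\<Sum>k<n. a k * p k (E \<union> F)) = (\<Sum>k<n. a k * p k E) + (\<Sum>k<n. a k * p k F)"
      if "E \<in> A" "F \<in> A" "E \<inter> F = {}" for E F
      using pba_add[OF p that] by (simp add: distrib_left sum.distrib)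
  qed
qed

lemma conv_comb_trace_lift:
  assumes "S \<subseteq> X" and TS: "\<forall>\<omega>\<in>S. \<forall>F\<in>A. TS \<omega> (F \<inter> S) = T \<omega> F"
    and "RS \<in> conv_comb (TS ` S)"
  obtains R where "R \<in> conv_comb (T ` X)" and "\<forall>F\<in>A. R F = RS (F \<inter> S)"
proof -
  obtain n :: nat and a p where RS: "RS = (\<lambda>E. \<Sum>k<n. a k * p k E)"
    and a: "\<forall>k<n. 0 \<le> a k \<and> p k \<in> TS ` S" "(\<Sum>k<n. a k) = 1"
    using assms(3) unfolding conv_comb_def by blast
  define w where "w k = inv_into S TS (p k)" for k
  have w: "w k \<in> S" "TS (w k) = p k" if "k < n" for k
    unfolding w_def using a(1) that by (auto intro: inv_into_into f_inv_into_f)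
  define R where "R E = (\<Sum>k<n. a k * T (w k) E)" for E
  have "R \<in> conv_comb (T ` X)"
    unfolding conv_comb_def R_def
    using a w(1) assms(1) by (intro CollectI exI[of _ n] exI[of _ a] exI[of _ "\<lambda>k. T (w k)"]) auto
  moreover have "\<forall>F\<in>A. R F = RS (F \<inter> S)"
    unfolding R_def RS
  proof (intro ballI sum.cong refl)
    fix F k assume "F \<in> A" "k \<in> {..<n}"
    then show "a k * T (w k) F = a k * p k (F \<inter> S)"
      using w[of k] TS by force
  qed
  ultimately show thesis by (rule that)
qed

lemma (in algebra) wstar_closure_trace_lift:
  assumes S: "S \<subseteq> \<Omega>" and T: "T ` \<Omega> \<subseteq> pba \<Omega> M"
    and TS: "\<forall>\<omega>\<in>S. \<forall>F\<in>M. TS \<omega> (F \<inter> S) = T \<omega> F"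
    and P: "P \<in> wstar_closure S (trace_field M S) (conv_comb (TS ` S))"
  shows "(\<lambda>F. P (F \<inter> S)) \<in> wstar_closure \<Omega> M (conv_comb (T ` \<Omega>))"
proof -
  let ?Q = "\<lambda>F. P (F \<inter> S)"
  have "P \<in> pba S (trace_field M S)"
    using P unfolding wstar_closure_def by blast
  then have Q: "?Q \<in> pba \<Omega> M"
    by (rule pba_trace_lift[OF S])
  show ?thesis
    unfolding wstar_closure_def
  proof (intro CollectI conjI Q allI impI)
    fix fs :: "('a \<Rightarrow> real) set" and \<epsilon> :: real
    assume fs: "finite fs \<and> fs \<subseteq> Bfun \<Omega> M" and "0 < \<epsilon>"
    moreover have "fs \<subseteq> Bfun S (trace_field M S)"
      using fs Bfun_trace[OF S] by blast
    ultimately obtain RS where "RS \<in> conv_comb (TS ` S)"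
      and RS: "\<forall>f\<in>fs. \<bar>fa_integral S (trace_field M S) P f - fa_integral S (trace_field M S) RS f\<bar> < \<epsilon>"
      using P unfolding wstar_closure_def by blast
    then obtain R where R: "R \<in> conv_comb (T ` \<Omega>)" and RRS: "\<forall>F\<in>M. R F = RS (F \<inter> S)"
      using conv_comb_trace_lift[OF S TS] by blast
    have "R \<in> pba \<Omega> M"
      using R conv_comb_pba[OF T] by blast
    then have "fa_integral \<Omega> M ?Q f = fa_integral S (trace_field M S) P f"
        "fa_integral \<Omega> M R f = fa_integral S (trace_field M S) RS f" if "f \<in> fs" for f
      using fa_integral_trace[OF S] Q RRS fs that by blast+
    with RS show "\<exists>R\<in>conv_comb (T ` \<Omega>). \<forall>f\<in>fs. \<bar>fa_integral \<Omega> M ?Q f - fa_integral \<Omega> M R f\<bar> < \<epsilon>"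
      by (intro bexI[OF _ R]) simp
  qed
qed

lemma type_space_algebra: "type_space \<Omega> A N M t \<Longrightarrow> algebra \<Omega> A"
  unfolding type_space_def field_on_iff_algebra by blast

lemma type_space_pba: "type_space \<Omega> A N M t \<Longrightarrow> i \<in> N \<Longrightarrow> t i ` \<Omega> \<subseteq> pba \<Omega> A"
  unfolding type_space_def by blast

text \<open>The certain event \<open>E \<subseteq> S\<close> makes \<open>t i \<omega> F\<close> depend only on \<open>F \<inter> S\<close>, so the choice made by \<open>SOME\<close>
  in \<^const>\<open>induced_types\<close> is irrelevant.\<close>
lemma induced_types_trace:
  assumes T: "type_space \<Omega> A N M t" and S: "common_certainty_component \<Omega> A N t S"
    and "i \<in> N" "\<omega> \<in> S" "F \<in> A"
  shows "induced_types A S t i \<omega> (F \<inter> S) = t i \<omega> F"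
proof -
  interpret algebra \<Omega> A
    using type_space_algebra[OF T] .
  obtain E where E: "E \<in> A" "E \<subseteq> S" "t i \<omega> E = 1"
    using S assms(3,4) unfolding common_certainty_component_def by blast
  have t: "t i \<omega> \<in> pba \<Omega> A"
    using type_space_pba[OF T assms(3)] S assms(4) unfolding common_certainty_component_def by blast
  define F' where "F' = (SOME F'. F' \<in> A \<and> F \<inter> S = F' \<inter> S)"
  have F': "F' \<in> A" "F \<inter> S = F' \<inter> S"
    unfolding F'_def using someI_ex[of "\<lambda>F'. F' \<in> A \<and> F \<inter> S = F' \<inter> S"] assms(5) by blast+
  have "F' \<inter> E = F \<inter> E"
    using F'(2) E(2) by blast
  then have "t i \<omega> F' = t i \<omega> F"
    using pba_Int_certain[OF t E(1,3)] F'(1) assms(5) by metis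
  then show ?thesis
    unfolding induced_types_def F'_def by simp
qed

lemma Pi_set_trace_lift:
  assumes T: "type_space \<Omega> A N M t" and S: "common_certainty_component \<Omega> A N t S"
    and "i \<in> N" and P: "P \<in> Pi_set S (trace_field A S) (induced_types A S t) i"
  shows "(\<lambda>F. P (F \<inter> S)) \<in> Pi_set \<Omega> A t i"
  unfolding Pi_set_def
proof (rule algebra.wstar_closure_trace_lift[OF type_space_algebra[OF T]])
  show "S \<subseteq> \<Omega>"
    using S unfolding common_certainty_component_def by blast
  show "t i ` \<Omega> \<subseteq> pba \<Omega> A"
    using type_space_pba[OF T \<open>i \<in> N\<close>] .
  show "\<forall>\<omega>\<in>S. \<forall>F\<in>A. induced_types A S t i \<omega> (F \<inter> S) = t i \<omega> F"
    using induced_types_trace[OF T S \<open>i \<in> N\<close>] by blast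
  show "P \<in> wstar_closure S (trace_field A S) (conv_comb (induced_types A S t i ` S))"
    using P unfolding Pi_set_def .
qed

theorem lemma12:
  fixes \<Omega> :: "'w set" and \<A> :: "'w set set" and N :: "'i set"
    and M :: "'i \<Rightarrow> 'w set set" and t :: "'i \<Rightarrow> 'w \<Rightarrow> 'w set \<Rightarrow> real" and S :: "'w set"
  assumes "type_space \<Omega> \<A> N M t"
    and "common_certainty_component \<Omega> \<A> N t S"
    and "consistent S (trace_field \<A> S) N (induced_types \<A> S t)"
  shows "consistent \<Omega> \<A> N t"
  unfolding consistent_def
proof (intro allI impI)
  fix I assume I: "finite I \<and> I \<subseteq> N"
  then obtain P where "P \<in> (\<Inter>i\<in>I. Pi_set S (trace_field \<A> S) (induced_types \<A> S t) i)"
    using assms(3) unfolding consistent_def by blast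
  then have "(\<lambda>F. P (F \<inter> S)) \<in> (\<Inter>i\<in>I. Pi_set \<Omega> \<A> t i)"
    using Pi_set_trace_lift[OF assms(1,2)] I by blast
  then show "(\<Inter>i\<in>I. Pi_set \<Omega> \<A> t i) \<noteq> {}"
    by blast
qed

end
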